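(* Let $G,H$ be real Hilbert spaces, let $D\subset G$ be bounded, let $x\in D$, and let $K_F,L_F,\lambda_F,L_f,\lambda_f,K_f\ge0$ be constants with $\lambda_F\le K_F^2$ and $\lambda_f\le L_f$. Let $F:G\to H$ be $K_F$-BJ, $L_F$-LJ and $\lambda_F$-UC on $D$, let $f:H\to\mathbb{R}$ be $L_f$-LG and $\lambda_f$-PL on $F(D)$, and suppose $\|\nabla f(F(x))\|\le K_f$. Let $L=K_F^2L_f+K_fL_F$, $\lambda=\lambda_F\lambda_f$, $\alpha\in(0,\tfrac2L)$, $q=1+L\alpha^2\lambda-2\alpha\lambda$, and $x^\alpha=x-\alpha\nabla(f\circ F)(x)$. If $[x,x^\alpha]\subset D$, then \[ (f\circ F)(x^\alpha)-f_*\le q\bigl((f\circ F)(x)-f_*\bigr), \] where $f_*=\inf_{h\in H}f(h)$.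
   Context: For $F:G\to H$ between Hilbert spaces, $\partial F(x)$ is the Fréchet derivative and $\partial F(x)^*$ its adjoint; $\nabla f$ denotes gradients of real-valued functions; $[x,y]=\{(1-t)x+ty:t\in[0,1]\}$. For $F$ differentiable on $D$: $K$-BJ on $D$ means $\|\partial F(x)\|\le K$ for $x\in D$; $L$-LJ on $D$ means $\|\partial F(x)-\partial F(y)\|\le L\|x-y\|$ for $x,y\in D$; $\lambda$-UC on $D$ ($\lambda>0$) means $\langle y,\partial F(x)\partial F(x)^*y\rangle\ge\lambda\|y\|^2$ for all $y\in H$, $x\in D$. For $f:H\to\mathbb{R}$ differentiable on $E$: $L$-LG on $E$ means $\|\nabla f(u)-\nabla f(v)\|\le L\|u-v\|$ for $u,v\in E$; if $f$ is bounded below on $H$ with $f_*=\inf_Hf\in\mathbb{R}$, $\lambda$-PL on $E$ ($\lambda>0$) means $\tfrac12\|\nabla f(u)\|^2\ge\lambda(f(u)-f_* )$ for $u\in E$. *)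

theory Defs
  imports "HOL-Analysis.Analysis"
begin

definition BJ :: "real \<Rightarrow> ('a::real_normed_vector \<Rightarrow> 'a \<Rightarrow> 'b::real_normed_vector) \<Rightarrow> 'a set \<Rightarrow> bool" where
  "BJ K DF D \<longleftrightarrow> (\<forall>x\<in>D. onorm (DF x) \<le> K)"

definition LJ :: "real \<Rightarrow> ('a::real_normed_vector \<Rightarrow> 'a \<Rightarrow> 'b::real_normed_vector) \<Rightarrow> 'a set \<Rightarrow> bool" where
  "LJ L DF D \<longleftrightarrow> (\<forall>x\<in>D. \<forall>y\<in>D. onorm (\<lambda>h. DF x h - DF y h) \<le> L * norm (x - y))"

text \<open>lambda-UC: uniform conditioning; DFs x is the adjoint of DF x.\<close>
definition UC :: "real \<Rightarrow> ('a::real_inner \<Rightarrow> 'a \<Rightarrow> 'b::real_inner) \<Rightarrow> ('a \<Rightarrow> 'b \<Rightarrow> 'a) \<Rightarrow> 'a set \<Rightarrow> bool" where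
  "UC lam DF DFs D \<longleftrightarrow> lam > 0 \<and> (\<forall>x\<in>D. \<forall>y. inner y (DF x (DFs x y)) \<ge> lam * (norm y)\<^sup>2)"

definition LG :: "real \<Rightarrow> ('b::real_normed_vector \<Rightarrow> 'b) \<Rightarrow> 'b set \<Rightarrow> bool" where
  "LG L gf E \<longleftrightarrow> (\<forall>u\<in>E. \<forall>v\<in>E. norm (gf u - gf v) \<le> L * norm (u - v))"

definition PL :: "real \<Rightarrow> ('b::real_normed_vector \<Rightarrow> real) \<Rightarrow> ('b \<Rightarrow> 'b) \<Rightarrow> 'b set \<Rightarrow> bool" where
  "PL lam f gf E \<longleftrightarrow> lam > 0 \<and> (\<forall>u\<in>E. (1/2) * (norm (gf u))\<^sup>2 \<ge> lam * (f u - Inf (range f)))"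

end

theory Submission
  imports Defs
begin

text \<open>
  By the chain rule the gradient of \<open>f \<circ> F\<close> at \<open>x\<close> is \<open>g = DF(x)\<^sup>* \<nabla>f(F x)\<close>, so uniform
  conditioning and the PL inequality for \<open>f\<close> give \<open>\<parallel>g\<parallel>\<^sup>2 \<ge> 2 \<lambda>\<^sub>F \<lambda>\<^sub>f (f(F x) - f\<^sub>*)\<close>.
  For \<open>z\<close> on the segment \<open>[x, x - \<alpha> g]\<close>, the derivative of \<open>f \<circ> F\<close> at \<open>z\<close> in a direction
  \<open>d\<close> deviates from that at \<open>x\<close> by at most \<open>L \<parallel>z - x\<parallel> \<parallel>d\<parallel>\<close> (product rule with BJ, LJ, LG
  and the bound on \<open>\<nabla>f(F x)\<close>), which yields the descent inequality
  \<open>(f \<circ> F)(x - \<alpha> g) \<le> (f \<circ> F)(x) - \<alpha> (1 - L \<alpha> / 2) \<parallel>g\<parallel>\<^sup>2\<close>. Combining the two estimates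
  gives the contraction factor \<open>q\<close>.
\<close>

lemma descent_lemma_segment:
  fixes \<phi> :: "'a::real_normed_vector \<Rightarrow> real"
  assumes deriv: "\<And>z. z \<in> closed_segment x y \<Longrightarrow> (\<phi> has_derivative \<phi>' z) (at z)"
    and lip: "\<And>z. z \<in> closed_segment x y \<Longrightarrow>
                \<phi>' z (y - x) - \<phi>' x (y - x) \<le> L * norm (z - x) * norm (y - x)"
  shows "\<phi> y \<le> \<phi> x + \<phi>' x (y - x) + L / 2 * (norm (y - x))\<^sup>2"
proof -
  define d where "d = y - x"
  define \<psi> where "\<psi> t = \<phi> (x + t *\<^sub>R d) - t * \<phi>' x d - L / 2 * t\<^sup>2 * (norm d)\<^sup>2" for t
  have \<psi>_deriv_nonpos: "\<exists>D. (\<psi> has_real_derivative D) (at t) \<and> D \<le> 0" if t: "0 \<le> t" "t \<le> 1" for t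
  proof -
    define z where "z = x + t *\<^sub>R d"
    have z: "z \<in> closed_segment x y"
      using t by (auto simp: in_segment z_def d_def algebra_simps intro!: exI[of _ t])
    have lin: "linear (\<phi>' z)"
      using deriv[OF z] has_derivative_linear by blast
    have "((\<lambda>s. x + s *\<^sub>R d) has_derivative (\<lambda>s. s *\<^sub>R d)) (at t)"
      by (auto intro!: derivative_eq_intros)
    from diff_chain_at[OF this deriv[OF z, unfolded z_def]]
    have "((\<lambda>s. \<phi> (x + s *\<^sub>R d)) has_derivative (\<lambda>s. \<phi>' z (s *\<^sub>R d))) (at t)"
      by (simp add: z_def o_def)
    moreover have "(\<lambda>s. \<phi>' z (s *\<^sub>R d)) = (*) (\<phi>' z d)"
      using linear_scale[OF lin] by (auto simp: mult.commute)
    ultimately have line: "((\<lambda>s. \<phi> (x + s *\<^sub>R d)) has_real_derivative \<phi>' z d) (at t)"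
      by (simp add: has_field_derivative_def)
    have "(\<psi> has_real_derivative \<phi>' z d - \<phi>' x d - L * t * (norm d)\<^sup>2) (at t)"
      unfolding \<psi>_def[abs_def] by (rule line derivative_eq_intros | simp)+
    moreover have "\<phi>' z d - \<phi>' x d \<le> L * t * (norm d)\<^sup>2"
      using lip[OF z] t by (simp add: z_def d_def power2_eq_square mult.assoc)
    ultimately show ?thesis by (intro exI[of _ "\<phi>' z d - \<phi>' x d - L * t * (norm d)\<^sup>2"]) simp
  qed
  have "\<psi> 1 \<le> \<psi> 0"
    using DERIV_nonpos_imp_nonincreasing[of 0 1 \<psi>] \<psi>_deriv_nonpos by auto
  then show ?thesis
    by (simp add: \<psi>_def d_def)
qed

lemma has_derivative_comp_gderiv:
  assumes "(F has_derivative A) (at x)" and "GDERIV f (F x) :> u"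
  shows "((f \<circ> F) has_derivative (\<lambda>h. inner (A h) u)) (at x)"
  using diff_chain_at[OF assms(1) assms(2)[unfolded gderiv_def]] by (simp add: o_def)

lemma gderiv_comp_eq_adjoint:
  assumes "(F has_derivative A) (at x)" and "GDERIV f (F x) :> u" and "GDERIV (f \<circ> F) x :> g"
    and adjoint: "\<And>h v. inner (A h) v = inner h (A' v)"
  shows "g = A' u"
proof -
  have "(\<lambda>h. inner h g) = (\<lambda>h. inner (A h) u)"
    using assms(3) has_derivative_comp_gderiv[OF assms(1,2)]
    unfolding gderiv_def by (rule has_derivative_unique)
  then have "\<forall>h. inner h g = inner h (A' u)"
    by (metis adjoint)
  then show ?thesis
    by (simp add: vector_eq_ldot)
qed

lemma inner_diff_le_onorm:
  fixes A B :: "'a::real_normed_vector \<Rightarrow> 'b::real_inner"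
  assumes "bounded_linear A" and "bounded_linear B"
  shows "inner (A d) u - inner (B d) v
           \<le> onorm A * norm d * norm (u - v) + onorm (\<lambda>h. A h - B h) * norm d * norm v"
proof -
  have "bounded_linear (\<lambda>h. A h - B h)"
    using assms by (rule bounded_linear_sub)
  then have AB: "norm (A d - B d) \<le> onorm (\<lambda>h. A h - B h) * norm d"
    by (rule onorm)
  have "inner (A d) u - inner (B d) v = inner (A d) (u - v) + inner (A d - B d) v"
    by (simp add: inner_diff_right inner_diff_left)
  also have "\<dots> \<le> norm (A d) * norm (u - v) + norm (A d - B d) * norm v"
    by (intro add_mono norm_cauchy_schwarz)
  also have "\<dots> \<le> onorm A * norm d * norm (u - v) + onorm (\<lambda>h. A h - B h) * norm d * norm v"
    using onorm[OF assms(1), of d] AB by (intro add_mono mult_right_mono) auto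
  finally show ?thesis .
qed

lemma comp_directional_derivative_lipschitz:
  assumes F_deriv: "\<forall>y\<in>D. (F has_derivative DF y) (at y)"
    and "BJ KF DF D" and "LJ LF DF D" and "LG Lf gf (F ` D)" and "Lf \<ge> 0"
    and x: "x \<in> D" and seg: "closed_segment x z \<subseteq> D" and "norm (gf (F x)) \<le> Kf"
  shows "inner (DF z d) (gf (F z)) - inner (DF x d) (gf (F x))
           \<le> (KF\<^sup>2 * Lf + Kf * LF) * norm (z - x) * norm d"
proof -
  have z: "z \<in> D"
    using seg by auto
  have bl: "bounded_linear (DF y)" if "y \<in> D" for y
    using F_deriv that has_derivative_bounded_linear by blast
  have BJ: "onorm (DF y) \<le> KF" if "y \<in> D" for y
    using assms(2) that by (simp add: BJ_def)
  have "norm (F z - F x) \<le> KF * norm (z - x)"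
    using seg F_deriv BJ
    by (intro differentiable_bound[OF convex_closed_segment]) (auto intro: has_derivative_at_withinI)
  then have grad_diff: "norm (gf (F z) - gf (F x)) \<le> Lf * (KF * norm (z - x))"
    using assms(4,5) x z unfolding LG_def by (meson image_eqI mult_left_mono order_trans)
  have jac_diff: "onorm (\<lambda>h. DF z h - DF x h) \<le> LF * norm (z - x)"
    using assms(3) x z by (simp add: LJ_def)
  have "inner (DF z d) (gf (F z)) - inner (DF x d) (gf (F x))
          \<le> onorm (DF z) * norm d * norm (gf (F z) - gf (F x))
            + onorm (\<lambda>h. DF z h - DF x h) * norm d * norm (gf (F x))"
    using bl[OF z] bl[OF x] by (rule inner_diff_le_onorm)
  also have "\<dots> \<le> KF * norm d * (Lf * (KF * norm (z - x))) + LF * norm (z - x) * norm d * Kf"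
    using BJ[OF z] onorm_pos_le[OF bl[OF z]] grad_diff jac_diff assms(8)
      onorm_pos_le[OF bounded_linear_sub[OF bl[OF z] bl[OF x]]]
    by (intro add_mono mult_mono) auto
  also have "\<dots> = (KF\<^sup>2 * Lf + Kf * LF) * norm (z - x) * norm d"
    by (simp add: power2_eq_square algebra_simps)
  finally show ?thesis .
qed

lemma comp_gradient_step_descent:
  fixes F :: "'a::real_inner \<Rightarrow> 'b::real_inner" and DFs :: "'a \<Rightarrow> 'b \<Rightarrow> 'a"
    and gf :: "'b \<Rightarrow> 'b" and x :: 'a and \<alpha> :: real
  defines "g \<equiv> DFs x (gf (F x))"
  assumes F_deriv: "\<forall>y\<in>D. (F has_derivative DF y) (at y)"
    and adjoint: "\<forall>u v. inner (DF x u) v = inner u (DFs x v)"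
    and f_grad: "\<forall>u\<in>F ` D. GDERIV f u :> gf u"
    and BJ: "BJ KF DF D" and LJ: "LJ LF DF D" and LG: "LG Lf gf (F ` D)" and "Lf \<ge> 0"
    and x: "x \<in> D" and Kf: "norm (gf (F x)) \<le> Kf"
    and seg: "closed_segment x (x - \<alpha> *\<^sub>R g) \<subseteq> D"
  shows "(f \<circ> F) (x - \<alpha> *\<^sub>R g)
           \<le> (f \<circ> F) x - \<alpha> * (1 - (KF\<^sup>2 * Lf + Kf * LF) * \<alpha> / 2) * (norm g)\<^sup>2"
proof -
  let ?L = "KF\<^sup>2 * Lf + Kf * LF" and ?y = "x - \<alpha> *\<^sub>R g"
  have "(f \<circ> F) ?y \<le> (f \<circ> F) x + inner (DF x (?y - x)) (gf (F x)) + ?L / 2 * (norm (?y - x))\<^sup>2"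
  proof (rule descent_lemma_segment)
    fix z
    assume z: "z \<in> closed_segment x ?y"
    then have "z \<in> D"
      using seg by blast
    then show "((f \<circ> F) has_derivative (\<lambda>h. inner (DF z h) (gf (F z)))) (at z)"
      using F_deriv f_grad by (simp add: has_derivative_comp_gderiv)
    have "closed_segment x z \<subseteq> D"
      using z seg closed_segment_subset[OF ends_in_segment(1) z convex_closed_segment] by blast
    then show "inner (DF z (?y - x)) (gf (F z)) - inner (DF x (?y - x)) (gf (F x))
                 \<le> ?L * norm (z - x) * norm (?y - x)"
      by (rule comp_directional_derivative_lipschitz[OF F_deriv BJ LJ LG \<open>Lf \<ge> 0\<close> x _ Kf])
  qed
  also have "inner (DF x (?y - x)) (gf (F x)) = - \<alpha> * (norm g)\<^sup>2"
  proof -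
    have "linear (DF x)"
      using F_deriv x has_derivative_linear by blast
    moreover have "?y - x = (- \<alpha>) *\<^sub>R g"
      by simp
    ultimately have "DF x (?y - x) = (- \<alpha>) *\<^sub>R DF x g"
      by (simp only: linear_scale)
    moreover have "inner (DF x g) (gf (F x)) = (norm g)\<^sup>2"
      using adjoint by (simp add: g_def power2_norm_eq_inner)
    ultimately show ?thesis
      by simp
  qed
  also have "(norm (?y - x))\<^sup>2 = \<alpha>\<^sup>2 * (norm g)\<^sup>2"
    by (simp add: power_mult_distrib)
  finally have "(f \<circ> F) ?y \<le> (f \<circ> F) x + - \<alpha> * (norm g)\<^sup>2 + ?L / 2 * (\<alpha>\<^sup>2 * (norm g)\<^sup>2)" .
  moreover have "- \<alpha> * (norm g)\<^sup>2 + ?L / 2 * (\<alpha>\<^sup>2 * (norm g)\<^sup>2) = - (\<alpha> * (1 - ?L * \<alpha> / 2) * (norm g)\<^sup>2)"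
    by (simp add: algebra_simps power2_eq_square)
  ultimately show ?thesis
    by linarith
qed

lemma PL_adjoint_gradient:
  assumes "x \<in> D" and adjoint: "\<forall>u v. inner (DF x u) v = inner u (DFs x v)"
    and "UC lamF DF DFs D" and "PL lamf f gf (F ` D)"
  shows "2 * (lamF * lamf) * (f (F x) - Inf (range f)) \<le> (norm (DFs x (gf (F x))))\<^sup>2"
proof -
  let ?v = "gf (F x)"
  have "lamF > 0" and UC: "lamF * (norm ?v)\<^sup>2 \<le> inner ?v (DF x (DFs x ?v))"
    using assms(1,3) by (auto simp: UC_def)
  have PL: "lamf * (f (F x) - Inf (range f)) \<le> 1 / 2 * (norm ?v)\<^sup>2"
    using assms(1,4) by (auto simp: PL_def)
  have "2 * (lamF * lamf) * (f (F x) - Inf (range f)) \<le> lamF * (norm ?v)\<^sup>2"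
    using mult_left_mono[OF PL, of lamF] \<open>lamF > 0\<close> by (simp add: algebra_simps)
  also have "\<dots> \<le> inner (DFs x ?v) (DFs x ?v)"
    using UC adjoint by (simp add: inner_commute)
  finally show ?thesis
    by (simp add: power2_norm_eq_inner)
qed

lemma contraction_from_descent_and_PL:
  fixes L \<alpha> \<mu> N E \<delta> :: real
  assumes descent: "\<delta> \<le> E - \<alpha> * (1 - L * \<alpha> / 2) * N" and PL: "2 * \<mu> * E \<le> N"
    and "0 < \<alpha>" and "\<alpha> < 2 / L"
  shows "\<delta> \<le> (1 + L * \<alpha>\<^sup>2 * \<mu> - 2 * \<alpha> * \<mu>) * E"
proof -
  have "L > 0"
    using assms(3,4) by (metis divide_le_0_iff less_le_not_le not_less order.strict_trans zero_less_numeral)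
  then have "0 \<le> \<alpha> * (1 - L * \<alpha> / 2)"
    using assms(3,4) by (simp add: field_simps)
  then have "\<delta> \<le> E - \<alpha> * (1 - L * \<alpha> / 2) * (2 * \<mu> * E)"
    using descent mult_left_mono[OF PL] by (smt (verit))
  also have "\<dots> = (1 + L * \<alpha>\<^sup>2 * \<mu> - 2 * \<alpha> * \<mu>) * E"
    by (simp add: power2_eq_square algebra_simps)
  finally show ?thesis .
qed

theorem proposition10:
  fixes F :: "'g::{real_inner,complete_space} \<Rightarrow> 'h::{real_inner,complete_space}"
    and DF :: "'g \<Rightarrow> 'g \<Rightarrow> 'h" and DFs :: "'g \<Rightarrow> 'h \<Rightarrow> 'g"
    and f :: "'h \<Rightarrow> real" and gf :: "'h \<Rightarrow> 'h" and gfF :: "'g"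
    and D :: "'g set" and x :: 'g
    and KF LF lamF Lf lamf Kf \<alpha> :: real
  assumes "bounded D" and "x \<in> D"
    and "KF \<ge> 0" "LF \<ge> 0" "lamF \<ge> 0" "Lf \<ge> 0" "lamf \<ge> 0" "Kf \<ge> 0"
    and "lamF \<le> KF\<^sup>2" and "lamf \<le> Lf"
    and F_deriv: "\<forall>y\<in>D. (F has_derivative DF y) (at y)"
    and adjoint: "\<forall>y\<in>D. \<forall>u v. inner (DF y u) v = inner u (DFs y v)"
    and "BJ KF DF D" and "LJ LF DF D" and "UC lamF DF DFs D"
    and f_grad: "\<forall>u\<in>F ` D. GDERIV f u :> gf u"
    and "bdd_below (range f)"
    and "LG Lf gf (F ` D)" and "PL lamf f gf (F ` D)"
    and "norm (gf (F x)) \<le> Kf"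
    and comp_grad: "GDERIV (f \<circ> F) x :> gfF"
    and "0 < \<alpha>" and "\<alpha> < 2 / (KF\<^sup>2 * Lf + Kf * LF)"
    and "closed_segment x (x - \<alpha> *\<^sub>R gfF) \<subseteq> D"
  shows "(f \<circ> F) (x - \<alpha> *\<^sub>R gfF) - Inf (range f)
           \<le> (1 + (KF\<^sup>2 * Lf + Kf * LF) * \<alpha>\<^sup>2 * (lamF * lamf) - 2 * \<alpha> * (lamF * lamf))
              * ((f \<circ> F) x - Inf (range f))"
proof -
  let ?L = "KF\<^sup>2 * Lf + Kf * LF" and ?E = "(f \<circ> F) x - Inf (range f)"
  have x_adjoint: "\<forall>u v. inner (DF x u) v = inner u (DFs x v)"
    using adjoint \<open>x \<in> D\<close> by blast
  have gfF: "gfF = DFs x (gf (F x))"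
    using F_deriv f_grad \<open>x \<in> D\<close> x_adjoint
    by (intro gderiv_comp_eq_adjoint[OF _ _ comp_grad]) auto
  have "(f \<circ> F) (x - \<alpha> *\<^sub>R gfF) \<le> (f \<circ> F) x - \<alpha> * (1 - ?L * \<alpha> / 2) * (norm gfF)\<^sup>2"
    unfolding gfF
    using F_deriv x_adjoint f_grad \<open>BJ KF DF D\<close> \<open>LJ LF DF D\<close> \<open>LG Lf gf (F ` D)\<close> \<open>Lf \<ge> 0\<close>
      \<open>x \<in> D\<close> \<open>norm (gf (F x)) \<le> Kf\<close> \<open>closed_segment x (x - \<alpha> *\<^sub>R gfF) \<subseteq> D\<close>
    by (intro comp_gradient_step_descent) (auto simp: gfF)
  then have descent:
      "(f \<circ> F) (x - \<alpha> *\<^sub>R gfF) - Inf (range f) \<le> ?E - \<alpha> * (1 - ?L * \<alpha> / 2) * (norm gfF)\<^sup>2"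
    by linarith
  have "2 * (lamF * lamf) * ?E \<le> (norm gfF)\<^sup>2"
    using PL_adjoint_gradient[OF \<open>x \<in> D\<close> x_adjoint \<open>UC lamF DF DFs D\<close> \<open>PL lamf f gf (F ` D)\<close>]
    by (simp add: gfF)
  from contraction_from_descent_and_PL[OF descent this \<open>0 < \<alpha>\<close> \<open>\<alpha> < 2 / ?L\<close>]
  show ?thesis .
qed

end
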